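(* Assume that $\bar r^j\in\mathrm{recc}(C)$ for every $j\in N_0$, and that $C$ is bounded. Then $$\mathrm{conv}\Big(\Big\{x\in P^B\setminus C:\sum_{j\in N}\frac{x_j}{\alpha_j}\le1\Big\}\Big)=\Big\{x\in P^B:\sum_{j\in N}\frac{x_j}{\alpha_j}\le1\Big\},$$ $$\mathrm{conv}\Big(\Big\{x\in P^B\setminus C:\sum_{j\in N}\frac{x_j}{\beta_j}\ge1\Big\}\Big)=\Big\{x\in P^B:\sum_{j\in N}\frac{x_j}{\beta_j}\ge1\Big\}.$$
   Context: Let $A\in\mathbb{R}^{m\times n}$ have full row rank, $b\in\mathbb{R}^m$, and $P=\{x\in\mathbb{R}^n_+:Ax=b\}$. Let $C\subseteq\mathbb{R}^n$ be an open convex set. Fix a basis $B$ of $P$ with nonbasic set $N=\{1,\dots,n\}\setminus B$. Write $P=\{x:x_i=\bar b_i-\sum_{j\in N}\bar a_{ij}x_j\ (i\in B),\ x\ge0\}$ with $\bar b\ge0$. The basic solution $\bar x$ has $\bar x_i=\bar b_i$ ($i\in B$) and $0$ ($i\in N$). $P^B$ is obtained by dropping $x_i\ge0$ for $i\in B$. For $j\in N$, $\bar r^j$ has $\bar r^j_k=-\bar a_{kj}$ ($k\in B$), $\bar r^j_j=1$, and $0$ otherwise. Thus $P^B=\{\bar x+\sum_{j\in N}x_j\bar r^j:x_j\ge0\}$, and for $x\in P^B$ the $x_j$ ($j\in N$) are the coefficients in this representation. It is assumed that $\bar x\notin\mathrm{cl}(C)$. For $j\in N$, $\alpha_j=\inf\{\lambda\ge0:\bar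 x+\lambda\bar r^j\in C\}$ and $\beta_j=\sup\{\lambda\ge0:\bar x+\lambda\bar r^j\in C\}$, with $\alpha_j=+\infty$, $\beta_j=-\infty$ if the halfline misses $C$. Let $N_0=\{j\in N:\alpha_j=+\infty,\beta_j=-\infty\}$. We use the convention $t/\pm\infty=0$. For a set $K$, $\mathrm{recc}(K)=\{d:x+\lambda d\in K\ \forall x\in K,\lambda\ge0\}$. *)

theory Defs
  imports "HOL-Analysis.Analysis" "HOL-Library.Extended_Real"
begin

text \<open>Index set {1..n} is the finite type 'n, rows {1..m} the finite type 'm.
  A basis B is a set of column indices whose columns are linearly independent
  and of cardinality m (full row rank); it is a basis of P (feasible) when the
  basic solution is nonnegative.\<close>

definition is_basis :: "real^'n^'m \<Rightarrow> 'n set \<Rightarrow> bool" where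
  "is_basis A B \<longleftrightarrow> card B = CARD('m) \<and> inj_on (\<lambda>i. column i A) B
      \<and> \<not> dependent ((\<lambda>i. column i A) ` B)"

definition basic_sol :: "real^'n^'m \<Rightarrow> real^'m \<Rightarrow> 'n set \<Rightarrow> real^'n" where
  "basic_sol A b B = (THE x. A *v x = b \<and> (\<forall>i. i \<notin> B \<longrightarrow> x $ i = 0))"

text \<open>ray rbar^j: rbar^j_j = 1, rbar^j_k = 0 for other nonbasic k, and A rbar^j = 0,
  i.e. rbar^j_k = - abar_kj for basic k\<close>
definition basic_ray :: "real^'n^'m \<Rightarrow> 'n set \<Rightarrow> 'n \<Rightarrow> real^'n" where
  "basic_ray A B j = (THE r. A *v r = 0 \<and> r $ j = 1 \<and>
       (\<forall>k. k \<notin> B \<and> k \<noteq> j \<longrightarrow> r $ k = 0))"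

text \<open>P^B: P with the constraints x_i >= 0 for basic i dropped\<close>
definition PB :: "real^'n^'m \<Rightarrow> real^'m \<Rightarrow> 'n set \<Rightarrow> (real^'n) set" where
  "PB A b B = {x. A *v x = b \<and> (\<forall>j. j \<notin> B \<longrightarrow> 0 \<le> x $ j)}"

definition alpha :: "real^'n \<Rightarrow> real^'n \<Rightarrow> (real^'n) set \<Rightarrow> ereal" where
  "alpha xb r C = Inf (ereal ` {t::real. 0 \<le> t \<and> xb + t *\<^sub>R r \<in> C})"

definition beta :: "real^'n \<Rightarrow> real^'n \<Rightarrow> (real^'n) set \<Rightarrow> ereal" where
  "beta xb r C = Sup (ereal ` {t::real. 0 \<le> t \<and> xb + t *\<^sub>R r \<in> C})"

definition ediv :: "real \<Rightarrow> ereal \<Rightarrow> real" where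
  "ediv t e = (if e = \<infinity> \<or> e = -\<infinity> then 0 else t / real_of_ereal e)"

definition recc :: "('a::real_vector) set \<Rightarrow> 'a set" where
  "recc K = {d. \<forall>x\<in>K. \<forall>t::real. 0 \<le> t \<longrightarrow> x + t *\<^sub>R d \<in> K}"

end

theory Submission
  imports Defs
begin

text \<open>Every point x of P^B is xb + \<Sum>_{j\<in>N} x_j r^j with x_j \<ge> 0. Since C is bounded and
  nonempty, no ray direction r^j is a recession direction of C, so by hypothesis every ray
  xb + \<lambda> r^j meets C, in an open bounded set of parameters that stays away from 0 because
  xb \<notin> cl C. Hence 0 < \<alpha>_j \<le> \<beta>_j < \<infinity>, the point xb + \<alpha>_j r^j lies outside C, and so does
  xb + t r^j for every t \<ge> \<beta>_j. Both right-hand sides are convex, being P^B cut by a half-space.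
  Conversely, if s = \<Sum> x_j / \<alpha>_j \<le> 1 then x = (1 - s) xb + \<Sum> (x_j / \<alpha>_j) (xb + \<alpha>_j r^j), and if
  s = \<Sum> x_j / \<beta>_j \<ge> 1 then x = \<Sum> (x_j / (s \<beta>_j)) (xb + s \<beta>_j r^j); all the points combined lie
  in P^B - C and satisfy the respective inequality.\<close>

lemma is_basis_homogeneous_eq_0:
  fixes A :: "real^'n^'m"
  assumes "is_basis A B" "A *v z = 0" "\<forall>k. k \<notin> B \<longrightarrow> z $ k = 0"
  shows "z = 0"
proof -
  let ?c = "\<lambda>i. column i A"
  have inj: "inj_on ?c B" and ind: "independent (?c ` B)"
    using assms(1) unfolding is_basis_def by auto
  define u where "u = (\<lambda>v. z $ the_inv_into B ?c v)"
  have "A *v z = (\<Sum>i\<in>UNIV. z $ i *\<^sub>R ?c i)"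
    by (simp add: matrix_mult_sum scalar_mult_eq_scaleR)
  also have "\<dots> = (\<Sum>i\<in>B. z $ i *\<^sub>R ?c i)"
    using assms(3) by (intro sum.mono_neutral_right) auto
  also have "\<dots> = (\<Sum>v\<in>?c ` B. u v *\<^sub>R v)"
    using inj the_inv_into_f_f[OF inj] by (simp add: sum.reindex u_def)
  finally have "\<forall>v\<in>?c ` B. u v = 0"
    using ind assms(2) unfolding independent_explicit by auto
  then have "\<forall>i\<in>B. u (?c i) = 0"
    by blast
  then have "\<forall>i\<in>B. z $ i = 0"
    using the_inv_into_f_f[OF inj] by (simp add: u_def)
  with assms(3) show ?thesis
    by (metis vec_eq_iff zero_index)
qed

lemma is_basis_solvable:
  fixes A :: "real^'n^'m"
  assumes "is_basis A B"
  shows "\<exists>z. A *v z = v \<and> (\<forall>k. k \<notin> B \<longrightarrow> z $ k = 0)"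
proof -
  let ?c = "\<lambda>i. column i A"
  have inj: "inj_on ?c B" and ind: "independent (?c ` B)" and card: "card B = CARD('m)"
    using assms unfolding is_basis_def by auto
  have fin: "finite (?c ` B)"
    using ind by (simp add: independent_explicit)
  have "card (?c ` B) = dim (UNIV :: (real^'m) set)"
    using inj card by (simp add: card_image)
  then have "v \<in> span (?c ` B)"
    using eucl.card_eq_dim[of "?c ` B" UNIV] ind fin by auto
  then obtain u where u: "v = (\<Sum>w\<in>?c ` B. u w *\<^sub>R w)"
    using span_finite[OF fin] by auto
  define z where "z = (\<chi> i. if i \<in> B then u (?c i) else 0)"
  have "A *v z = (\<Sum>i\<in>UNIV. z $ i *\<^sub>R ?c i)"
    by (simp add: matrix_mult_sum scalar_mult_eq_scaleR)
  also have "\<dots> = (\<Sum>i\<in>B. u (?c i) *\<^sub>R ?c i)"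
    by (subst sum.mono_neutral_right[of UNIV B]) (auto simp: z_def)
  also have "\<dots> = v"
    using u inj by (simp add: sum.reindex)
  finally show ?thesis
    by (auto simp: z_def)
qed

lemma is_basis_ex1_solution:
  fixes A :: "real^'n^'m"
  assumes "is_basis A B"
  shows "\<exists>!z. A *v z = v \<and> (\<forall>k. k \<notin> B \<longrightarrow> z $ k = 0)"
proof -
  obtain z where z: "A *v z = v" "\<forall>k. k \<notin> B \<longrightarrow> z $ k = 0"
    using is_basis_solvable[OF assms] by blast
  have "y = z" if "A *v y = v" "\<forall>k. k \<notin> B \<longrightarrow> y $ k = 0" for y
    using is_basis_homogeneous_eq_0[OF assms, of "y - z"] that z
    by (simp add: matrix_vector_mult_diff_distrib)
  with z show ?thesis
    by blast
qed

lemma basic_sol: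
  fixes A :: "real^'n^'m"
  assumes "is_basis A B"
  shows "A *v basic_sol A b B = b" and "k \<notin> B \<Longrightarrow> basic_sol A b B $ k = 0"
  using theI'[OF is_basis_ex1_solution[OF assms, of b]] unfolding basic_sol_def by auto

lemma basic_ray:
  fixes A :: "real^'n^'m"
  assumes "is_basis A B" "j \<notin> B"
  shows "A *v basic_ray A B j = 0" and "basic_ray A B j $ j = 1"
    and "k \<notin> B \<Longrightarrow> k \<noteq> j \<Longrightarrow> basic_ray A B j $ k = 0"
proof -
  let ?e = "axis j (1::real)"
  obtain z where z: "A *v z = - (A *v ?e)" "\<forall>k. k \<notin> B \<longrightarrow> z $ k = 0"
    using is_basis_solvable[OF assms(1)] by blast
  define r where "r = z + ?e"
  have r: "A *v r = 0 \<and> r $ j = 1 \<and> (\<forall>k. k \<notin> B \<and> k \<noteq> j \<longrightarrow> r $ k = 0)"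
    using z assms(2) by (auto simp: r_def matrix_vector_right_distrib axis_def)
  have "\<exists>!r. A *v r = 0 \<and> r $ j = 1 \<and> (\<forall>k. k \<notin> B \<and> k \<noteq> j \<longrightarrow> r $ k = 0)"
  proof (rule ex1I[of _ r])
    fix y assume y: "A *v y = 0 \<and> y $ j = 1 \<and> (\<forall>k. k \<notin> B \<and> k \<noteq> j \<longrightarrow> y $ k = 0)"
    have "(y - r) $ k = 0" if "k \<notin> B" for k
      using y r that by (cases "k = j") auto
    then have "y - r = 0"
      using y r by (intro is_basis_homogeneous_eq_0[OF assms(1)]) (auto simp: matrix_vector_mult_diff_distrib)
    then show "y = r"
      by simp
  qed (use r in blast)
  from theI'[OF this] show "A *v basic_ray A B j = 0" "basic_ray A B j $ j = 1"
    "k \<notin> B \<Longrightarrow> k \<noteq> j \<Longrightarrow> basic_ray A B j $ k = 0"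
    unfolding basic_ray_def by auto
qed

lemma basic_sol_plus_ray_nth:
  fixes A :: "real^'n^'m"
  assumes "is_basis A B" "j \<notin> B" "k \<notin> B"
  shows "(basic_sol A b B + t *\<^sub>R basic_ray A B j) $ k = (if k = j then t else 0)"
  using assms by (simp add: basic_sol basic_ray)

lemma basic_sol_plus_ray_in_PB:
  fixes A :: "real^'n^'m"
  assumes "is_basis A B" "j \<notin> B" "0 \<le> t"
  shows "basic_sol A b B + t *\<^sub>R basic_ray A B j \<in> PB A b B"
  using assms basic_sol_plus_ray_nth[OF assms(1,2)]
  by (simp add: PB_def basic_sol basic_ray matrix_vector_right_distrib matrix_vector_mult_scaleR)

lemma PB_eq_basic_sol_plus_rays:
  fixes A :: "real^'n^'m"
  assumes "is_basis A B" "x \<in> PB A b B"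
  shows "x = basic_sol A b B + (\<Sum>j\<in>-B. x $ j *\<^sub>R basic_ray A B j)"
proof -
  let ?y = "basic_sol A b B + (\<Sum>j\<in>-B. x $ j *\<^sub>R basic_ray A B j)"
  have "A *v ?y = b"
    using assms(1)
    by (simp add: matrix_vector_right_distrib matrix_vector_mult_scaleR vec.sum basic_sol basic_ray)
  moreover have "?y $ k = x $ k" if "k \<notin> B" for k
  proof -
    have "(\<Sum>j\<in>-B. x $ j * basic_ray A B j $ k) = (\<Sum>j\<in>-B. if j = k then x $ k else 0)"
      using assms(1) that by (intro sum.cong) (auto simp: basic_ray)
    then show ?thesis
      using assms(1) that by (simp add: sum_component basic_sol)
  qed
  ultimately have "x - ?y = 0"
    using assms by (intro is_basis_homogeneous_eq_0[OF assms(1)]) (auto simp: PB_def matrix_vector_mult_diff_distrib)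
  then show ?thesis
    by simp
qed

lemma convex_PB: "convex (PB A b B)"
  unfolding convex_def PB_def
  by (auto simp: matrix_vector_right_distrib matrix_vector_mult_scaleR scaleR_add_left[symmetric])

lemma ediv_0 [simp]: "ediv 0 e = 0"
  by (simp add: ediv_def)

lemma ediv_ereal: "ediv t (ereal a) = t / a"
  by (simp add: ediv_def)

lemma sum_ediv_eq_inner:
  fixes x :: "real^'n"
  shows "(\<Sum>j\<in>J. ediv (x $ j) (e j)) = (\<chi> j. if j \<in> J then ediv 1 (e j) else 0) \<bullet> x"
proof -
  have "(\<chi> j. if j \<in> J then ediv 1 (e j) else 0) \<bullet> x
      = (\<Sum>j\<in>UNIV. if j \<in> J then ediv 1 (e j) * x $ j else 0)"
    unfolding inner_vec_def by (intro sum.cong) auto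
  also have "\<dots> = (\<Sum>j\<in>J. ediv 1 (e j) * x $ j)"
    by (simp add: sum.If_cases)
  also have "\<dots> = (\<Sum>j\<in>J. ediv (x $ j) (e j))"
    by (intro sum.cong) (auto simp: ediv_def)
  finally show ?thesis ..
qed

lemma convex_PB_sum_ediv_le: "convex {x \<in> PB A b B. (\<Sum>j\<in>J. ediv (x $ j) (e j)) \<le> c}"
proof -
  have "{x \<in> PB A b B. (\<Sum>j\<in>J. ediv (x $ j) (e j)) \<le> c}
      = PB A b B \<inter> {x. (\<chi> j. if j \<in> J then ediv 1 (e j) else 0) \<bullet> x \<le> c}"
    by (simp only: sum_ediv_eq_inner Collect_conj_eq Collect_mem_eq)
  then show ?thesis
    using convex_Int[OF convex_PB convex_halfspace_le] by simp
qed

lemma convex_PB_sum_ediv_ge: "convex {x \<in> PB A b B. (\<Sum>j\<in>J. ediv (x $ j) (e j)) \<ge> c}"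
proof -
  have "{x \<in> PB A b B. (\<Sum>j\<in>J. ediv (x $ j) (e j)) \<ge> c}
      = PB A b B \<inter> {x. (\<chi> j. if j \<in> J then ediv 1 (e j) else 0) \<bullet> x \<ge> c}"
    by (simp only: sum_ediv_eq_inner Collect_conj_eq Collect_mem_eq)
  then show ?thesis
    using convex_Int[OF convex_PB convex_halfspace_ge] by simp
qed

lemma convex_base_point_combination:
  fixes K :: "'a::real_vector set"
  assumes "convex K" "p \<in> K" "finite J" "\<forall>j\<in>J. v j \<in> K \<and> 0 \<le> w j" "sum w J \<le> 1"
  shows "p + (\<Sum>j\<in>J. w j *\<^sub>R (v j - p)) \<in> K"
proof (cases "sum w J = 0")
  case True
  then have "\<forall>j\<in>J. w j = 0"
    using assms(3,4) sum_nonneg_eq_0_iff by blast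
  then show ?thesis
    using assms(2) by simp
next
  case False
  define s where "s = sum w J"
  have s: "0 < s"
    using False assms(4) sum_nonneg[of J w] by (simp add: s_def order_less_le)
  define z where "z = (\<Sum>j\<in>J. (w j / s) *\<^sub>R v j)"
  have "(\<Sum>j\<in>J. w j / s) = 1"
    using s by (simp add: s_def flip: sum_divide_distrib)
  then have "z \<in> K"
    unfolding z_def using assms(1,3,4) s by (intro convex_sum) auto
  moreover have "p + (\<Sum>j\<in>J. w j *\<^sub>R (v j - p)) = (1 - s) *\<^sub>R p + s *\<^sub>R z"
    using s by (simp add: z_def s_def scaleR_diff_right sum_subtractf scaleR_sum_right
        scaleR_sum_left[symmetric] algebra_simps)
  ultimately show ?thesis
    using convexD[OF assms(1,2)] s assms(5) by (simp add: s_def)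
qed

definition ray_times :: "'a::real_vector \<Rightarrow> 'a \<Rightarrow> 'a set \<Rightarrow> real set" where
  "ray_times p d C = {t. 0 \<le> t \<and> p + t *\<^sub>R d \<in> C}"

lemma alpha_eq_Inf_ray_times:
  assumes "ray_times p d C \<noteq> {}"
  shows "alpha p d C = ereal (Inf (ray_times p d C))"
proof -
  have "bdd_below (ray_times p d C)"
    by (auto simp: ray_times_def intro: bdd_belowI[of _ 0])
  then show ?thesis
    using ereal_Inf'[OF _ assms] unfolding alpha_def ray_times_def[symmetric] by simp
qed

lemma beta_eq_Sup_ray_times:
  assumes "bdd_above (ray_times p d C)" "ray_times p d C \<noteq> {}"
  shows "beta p d C = ereal (Sup (ray_times p d C))"
proof -
  obtain M t where "\<forall>s\<in>ray_times p d C. s \<le> M" "t \<in> ray_times p d C"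
    using assms by (auto simp: bdd_above_def)
  then have "\<bar>SUP s\<in>ray_times p d C. ereal s\<bar> \<noteq> \<infinity>"
    using SUP_upper[of t "ray_times p d C" ereal] SUP_least[of "ray_times p d C" ereal "ereal M"]
    by force
  then show ?thesis
    unfolding beta_def ray_times_def[symmetric] using ereal_Sup by simp
qed

lemma ray_times_empty:
  assumes "ray_times p d C = {}"
  shows "alpha p d C = \<infinity>" and "beta p d C = -\<infinity>"
  unfolding alpha_def beta_def ray_times_def[symmetric] assms
  by (simp_all add: top_ereal_def bot_ereal_def)

lemma bdd_above_ray_times:
  fixes C :: "'a::real_normed_vector set"
  assumes "bounded C" "d \<noteq> 0"
  shows "bdd_above (ray_times p d C)"
proof -
  obtain M where M: "\<forall>y\<in>C. norm y \<le> M"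
    using assms(1) bounded_iff by blast
  have "t \<le> (M + norm p) / norm d" if "t \<in> ray_times p d C" for t
  proof -
    have "t * norm d = norm ((p + t *\<^sub>R d) - p)"
      using that by (simp add: ray_times_def)
    also have "\<dots> \<le> M + norm p"
      using M that norm_triangle_ineq4[of "p + t *\<^sub>R d" p] by (force simp: ray_times_def)
    finally show ?thesis
      using assms(2) by (simp add: field_simps)
  qed
  then show ?thesis
    by (rule bdd_aboveI)
qed

lemma recc_bounded:
  fixes C :: "'a::real_normed_vector set"
  assumes "bounded C" "C \<noteq> {}"
  shows "recc C = {0}"
proof
  show "recc C \<subseteq> {0}"
  proof
    fix d assume d: "d \<in> recc C"
    obtain c where "c \<in> C"
      using assms(2) by blast
    with d have rays: "ray_times c d C = {0..}"
      by (auto simp: recc_def ray_times_def)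
    have "\<not> bdd_above (ray_times c d C)"
    proof
      assume "bdd_above (ray_times c d C)"
      then obtain M where M: "\<And>t. t \<in> ray_times c d C \<Longrightarrow> t \<le> M"
        by (meson bdd_above.E)
      have "\<bar>M\<bar> + 1 \<in> ray_times c d C"
        using rays by simp
      then show False
        using M abs_ge_self[of M] by fastforce
    qed
    then show "d \<in> {0}"
      using bdd_above_ray_times[OF assms(1), of d c] by auto
  qed
qed (simp add: recc_def)

lemma open_ray_times:
  fixes C :: "'a::real_normed_vector set"
  assumes "open C" "p \<notin> C"
  shows "open (ray_times p d C)"
proof -
  have "ray_times p d C = {0<..} \<inter> (\<lambda>t. p + t *\<^sub>R d) -` C"
    using assms(2) by (auto simp: ray_times_def order_le_less)
  then show ?thesis
    using assms(1) by (auto intro!: open_Int continuous_open_vimage continuous_intros)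
qed

lemma closure_ray_times_subset:
  fixes C :: "'a::real_normed_vector set"
  shows "closure (ray_times p d C) \<subseteq> ray_times p d (closure C)"
proof (rule closure_minimal)
  show "ray_times p d C \<subseteq> ray_times p d (closure C)"
    using closure_subset by (auto simp: ray_times_def)
  have "ray_times p d (closure C) = {0..} \<inter> (\<lambda>t. p + t *\<^sub>R d) -` closure C"
    by (auto simp: ray_times_def)
  then show "closed (ray_times p d (closure C))"
    by (auto intro!: closed_Int continuous_closed_vimage continuous_intros)
qed

lemma Inf_ray_times_pos:
  fixes C :: "'a::real_normed_vector set"
  assumes "p \<notin> closure C" "ray_times p d C \<noteq> {}"
  shows "0 < Inf (ray_times p d C)"
proof -
  have "Inf (ray_times p d C) \<in> closure (ray_times p d C)"
    using assms(2) by (intro closure_contains_Inf) (auto simp: ray_times_def intro: bdd_belowI[of _ 0])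
  then have "Inf (ray_times p d C) \<in> ray_times p d (closure C)"
    using closure_ray_times_subset by blast
  with assms(1) show ?thesis
    by (cases "Inf (ray_times p d C) = 0") (auto simp: ray_times_def)
qed

lemma Inf_ray_times_notin:
  fixes C :: "'a::real_normed_vector set"
  assumes "open C" "p \<notin> closure C" "ray_times p d C \<noteq> {}"
  shows "p + Inf (ray_times p d C) *\<^sub>R d \<notin> C"
proof -
  have "p \<notin> C"
    using assms(2) closure_subset by blast
  then have "Inf (ray_times p d C) \<notin> ray_times p d C"
    using assms(1) by (intro Inf_notin_open open_ray_times) (auto simp: ray_times_def order_le_less)
  with Inf_ray_times_pos[OF assms(2,3)] show ?thesis
    by (simp add: ray_times_def)
qed

lemma beyond_Sup_ray_times_notin:
  fixes C :: "'a::real_normed_vector set"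
  assumes "open C" "bounded C" "p \<notin> C" "d \<noteq> 0" "ray_times p d C \<noteq> {}"
    and "Sup (ray_times p d C) \<le> t"
  shows "p + t *\<^sub>R d \<notin> C"
proof
  assume in_C: "p + t *\<^sub>R d \<in> C"
  let ?T = "ray_times p d C"
  have bdd: "bdd_above ?T"
    using bdd_above_ray_times[OF assms(2,4)] .
  obtain s where "s \<in> ?T"
    using assms(5) by blast
  then have "0 \<le> t"
    using cSup_upper[OF _ bdd] assms(6) by (force simp: ray_times_def)
  then have "t \<in> ?T"
    using in_C by (simp add: ray_times_def)
  then have "t = Sup ?T"
    using cSup_upper[OF _ bdd] assms(6) by fastforce
  moreover have "Sup ?T \<notin> ?T"
    using bdd by (intro Sup_notin_open[of _ "Sup ?T + 1"] open_ray_times assms(1,3))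
      (auto dest: cSup_upper)
  ultimately show False
    using \<open>t \<in> ?T\<close> by simp
qed

lemma alpha_ray_exit:
  fixes C :: "(real^'n) set"
  assumes "open C" "p \<notin> closure C" "ray_times p d C \<noteq> {}"
  shows "\<exists>a>0. alpha p d C = ereal a \<and> p + a *\<^sub>R d \<notin> C"
  using assms alpha_eq_Inf_ray_times Inf_ray_times_pos Inf_ray_times_notin by blast

lemma beta_ray_exit:
  fixes C :: "(real^'n) set"
  assumes "open C" "bounded C" "p \<notin> closure C" "d \<noteq> 0" "ray_times p d C \<noteq> {}"
  shows "\<exists>c>0. beta p d C = ereal c \<and> (\<forall>t\<ge>c. p + t *\<^sub>R d \<notin> C)"
proof (intro exI conjI allI impI)
  let ?T = "ray_times p d C"
  have bdd: "bdd_above ?T" "bdd_below ?T"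
    using bdd_above_ray_times[OF assms(2,4)] by (auto simp: ray_times_def intro: bdd_belowI[of _ 0])
  show "beta p d C = ereal (Sup ?T)"
    using beta_eq_Sup_ray_times[OF bdd(1) assms(5)] .
  show "0 < Sup ?T"
    using Inf_ray_times_pos[OF assms(3,5)] cInf_le_cSup[OF assms(5) bdd(1,2)] by linarith
  show "p + t *\<^sub>R d \<notin> C" if "Sup ?T \<le> t" for t
    using assms closure_subset that by (intro beyond_Sup_ray_times_notin) auto
qed

lemma sum_ediv_basic_sol_plus_ray:
  fixes A :: "real^'n^'m"
  assumes "is_basis A B" "j \<notin> B"
  shows "(\<Sum>k\<in>-B. ediv ((basic_sol A b B + t *\<^sub>R basic_ray A B j) $ k) (e k)) = ediv t (e j)"
proof -
  have "(\<Sum>k\<in>-B. ediv ((basic_sol A b B + t *\<^sub>R basic_ray A B j) $ k) (e k))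
      = (\<Sum>k\<in>-B. if k = j then ediv t (e j) else 0)"
    using assms by (intro sum.cong) (auto simp: basic_sol basic_ray)
  then show ?thesis
    using assms(2) by simp
qed

lemma PB_sum_ediv_le_subset_convex_hull:
  fixes A :: "real^'n^'m"
  assumes bas: "is_basis A B" and "basic_sol A b B \<notin> C"
    and exit: "\<forall>j. j \<notin> B \<longrightarrow> (\<exists>a>0. e j = ereal a \<and> basic_sol A b B + a *\<^sub>R basic_ray A B j \<notin> C)"
  shows "{x \<in> PB A b B. (\<Sum>j\<in>-B. ediv (x $ j) (e j)) \<le> 1}
    \<subseteq> convex hull {x \<in> PB A b B - C. (\<Sum>j\<in>-B. ediv (x $ j) (e j)) \<le> 1}"
    (is "?S \<subseteq> convex hull ?V")
proof
  let ?xb = "basic_sol A b B" and ?r = "basic_ray A B"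
  obtain a where a_pos: "\<And>j. j \<notin> B \<Longrightarrow> 0 < a j" and a_e: "\<And>j. j \<notin> B \<Longrightarrow> e j = ereal (a j)"
    and a_out: "\<And>j. j \<notin> B \<Longrightarrow> ?xb + a j *\<^sub>R ?r j \<notin> C"
    using exit by metis
  have sum_a: "(\<Sum>j\<in>-B. ediv (y $ j) (e j)) = (\<Sum>j\<in>-B. y $ j / a j)" for y
    using a_e by (intro sum.cong) (auto simp: ediv_ereal)
  have "(\<Sum>j\<in>-B. ediv (?xb $ j) (e j)) = 0"
    by (intro sum.neutral) (simp add: basic_sol[OF bas])
  then have xb: "?xb \<in> ?V"
    using assms(2) by (simp add: PB_def basic_sol[OF bas])
  have vertex: "?xb + a j *\<^sub>R ?r j \<in> ?V" if "j \<notin> B" for j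
  proof -
    have "(\<Sum>k\<in>-B. ediv ((?xb + a j *\<^sub>R ?r j) $ k) (e k)) = 1"
      using a_pos[OF that] a_e[OF that]
      by (simp only: sum_ediv_basic_sol_plus_ray[OF bas that]) (simp add: ediv_ereal)
    then show ?thesis
      using a_pos[OF that] a_out[OF that] basic_sol_plus_ray_in_PB[OF bas that] by simp
  qed
  fix x assume x: "x \<in> ?S"
  have "x = ?xb + (\<Sum>j\<in>-B. x $ j *\<^sub>R ?r j)"
    using PB_eq_basic_sol_plus_rays[OF bas] x by simp
  also have "\<dots> = ?xb + (\<Sum>j\<in>-B. (x $ j / a j) *\<^sub>R ((?xb + a j *\<^sub>R ?r j) - ?xb))"
    using a_pos by (intro arg_cong2[where f = "(+)"] sum.cong) (auto simp: less_imp_neq[symmetric])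
  also have "\<dots> \<in> convex hull ?V"
  proof (rule convex_base_point_combination)
    show "?xb \<in> convex hull ?V"
      using xb by (rule hull_inc)
    show "\<forall>j\<in>-B. ?xb + a j *\<^sub>R ?r j \<in> convex hull ?V \<and> 0 \<le> x $ j / a j"
      using vertex x a_pos by (auto simp: PB_def less_imp_le hull_inc)
    show "(\<Sum>j\<in>-B. x $ j / a j) \<le> 1"
      using x by (simp add: sum_a)
  qed (simp_all add: convex_convex_hull)
  finally show "x \<in> convex hull ?V" .
qed

lemma PB_sum_ediv_ge_subset_convex_hull:
  fixes A :: "real^'n^'m"
  assumes bas: "is_basis A B"
    and exit: "\<forall>j. j \<notin> B \<longrightarrow> (\<exists>c>0. e j = ereal c \<and> (\<forall>t\<ge>c. basic_sol A b B + t *\<^sub>R basic_ray A B j \<notin> C))"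
  shows "{x \<in> PB A b B. (\<Sum>j\<in>-B. ediv (x $ j) (e j)) \<ge> 1}
    \<subseteq> convex hull {x \<in> PB A b B - C. (\<Sum>j\<in>-B. ediv (x $ j) (e j)) \<ge> 1}"
    (is "?S \<subseteq> convex hull ?V")
proof
  let ?xb = "basic_sol A b B" and ?r = "basic_ray A B"
  obtain c where c_pos: "\<And>j. j \<notin> B \<Longrightarrow> 0 < c j" and c_e: "\<And>j. j \<notin> B \<Longrightarrow> e j = ereal (c j)"
    and c_out: "\<And>j t. j \<notin> B \<Longrightarrow> c j \<le> t \<Longrightarrow> ?xb + t *\<^sub>R ?r j \<notin> C"
    using exit by metis
  have sum_c: "(\<Sum>j\<in>-B. ediv (y $ j) (e j)) = (\<Sum>j\<in>-B. y $ j / c j)" for y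
    using c_e by (intro sum.cong) (auto simp: ediv_ereal)
  fix x assume x: "x \<in> ?S"
  define s where "s = (\<Sum>j\<in>-B. x $ j / c j)"
  have s: "1 \<le> s"
    using x by (simp add: s_def sum_c)
  have vertex: "?xb + (s * c j) *\<^sub>R ?r j \<in> ?V" if "j \<notin> B" for j
  proof -
    have "(\<Sum>k\<in>-B. ediv ((?xb + (s * c j) *\<^sub>R ?r j) $ k) (e k)) = s"
      using c_pos[OF that] c_e[OF that]
      by (simp only: sum_ediv_basic_sol_plus_ray[OF bas that]) (simp add: ediv_ereal)
    moreover have "?xb + (s * c j) *\<^sub>R ?r j \<notin> C"
      using c_pos[OF that] s by (intro c_out[OF that]) simp
    ultimately show ?thesis
      using c_pos[OF that] s basic_sol_plus_ray_in_PB[OF bas that] by simp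
  qed
  have weights: "(\<Sum>j\<in>-B. x $ j / c j / s) = 1"
  proof -
    have "(\<Sum>j\<in>-B. x $ j / c j / s) = s / s"
      unfolding s_def by (rule sum_divide_distrib[symmetric])
    then show ?thesis
      using s by simp
  qed
  have "x = ?xb + (\<Sum>j\<in>-B. x $ j *\<^sub>R ?r j)"
    using PB_eq_basic_sol_plus_rays[OF bas] x by simp
  also have "\<dots> = (\<Sum>j\<in>-B. x $ j / c j / s) *\<^sub>R ?xb
      + (\<Sum>j\<in>-B. (x $ j / c j / s) *\<^sub>R ((s * c j) *\<^sub>R ?r j))"
    using weights c_pos s by (auto intro!: sum.cong simp: less_imp_neq[symmetric])
  also have "\<dots> = (\<Sum>j\<in>-B. (x $ j / c j / s) *\<^sub>R (?xb + (s * c j) *\<^sub>R ?r j))"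
    by (simp add: scaleR_add_right sum.distrib scaleR_sum_left)
  also have "\<dots> \<in> convex hull ?V"
    using vertex weights x c_pos s
    by (intro convex_sum) (auto simp: PB_def less_imp_le hull_inc)
  finally show "x \<in> convex hull ?V" .
qed

theorem proposition1:
  fixes A :: "real^'n^'m" and b :: "real^'m" and B :: "'n set"
    and C :: "(real^'n) set"
  assumes "rank A = CARD('m)"
    and "is_basis A B"
    and "\<forall>i. 0 \<le> basic_sol A b B $ i"
    and "open C" and "convex C"
    and "basic_sol A b B \<notin> closure C"
    and "\<forall>j. j \<notin> B \<and> alpha (basic_sol A b B) (basic_ray A B j) C = \<infinity>
              \<and> beta (basic_sol A b B) (basic_ray A B j) C = -\<infinity>
           \<longrightarrow> basic_ray A B j \<in> recc C"
    and "bounded C"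
  shows "convex hull {x \<in> PB A b B - C.
            (\<Sum>j\<in>-B. ediv (x $ j) (alpha (basic_sol A b B) (basic_ray A B j) C)) \<le> 1}
         = {x \<in> PB A b B.
            (\<Sum>j\<in>-B. ediv (x $ j) (alpha (basic_sol A b B) (basic_ray A B j) C)) \<le> 1}
    \<and> convex hull {x \<in> PB A b B - C.
            (\<Sum>j\<in>-B. ediv (x $ j) (beta (basic_sol A b B) (basic_ray A B j) C)) \<ge> 1}
         = {x \<in> PB A b B.
            (\<Sum>j\<in>-B. ediv (x $ j) (beta (basic_sol A b B) (basic_ray A B j) C)) \<ge> 1}"
    (is "convex hull ?V1 = ?S1 \<and> convex hull ?V2 = ?S2")
proof -
  let ?xb = "basic_sol A b B" and ?r = "basic_ray A B"
  have "?S1 \<subseteq> convex hull ?V1 \<and> ?S2 \<subseteq> convex hull ?V2"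
  proof (cases "C = {}")
    case True
    then show ?thesis
      by (simp add: hull_subset)
  next
    case False
    have ray: "?r j \<noteq> 0" if "j \<notin> B" for j
      using basic_ray(2)[OF assms(2) that] by auto
    have hits: "ray_times ?xb (?r j) C \<noteq> {}" if "j \<notin> B" for j
      using assms(7) ray_times_empty recc_bounded[OF assms(8) False] ray that by blast
    have xb: "?xb \<notin> C"
      using assms(6) closure_subset by blast
    have "\<forall>j. j \<notin> B \<longrightarrow> (\<exists>a>0. alpha ?xb (?r j) C = ereal a \<and> ?xb + a *\<^sub>R ?r j \<notin> C)"
      using alpha_ray_exit[OF assms(4,6) hits] by blast
    moreover have "\<forall>j. j \<notin> B \<longrightarrow>
        (\<exists>c>0. beta ?xb (?r j) C = ereal c \<and> (\<forall>t\<ge>c. ?xb + t *\<^sub>R ?r j \<notin> C))"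
      using beta_ray_exit[OF assms(4,8,6) ray hits] by blast
    ultimately show ?thesis
      by (intro conjI PB_sum_ediv_le_subset_convex_hull[OF assms(2) xb]
          PB_sum_ediv_ge_subset_convex_hull[OF assms(2)])
  qed
  moreover have "convex hull ?V1 \<subseteq> ?S1" "convex hull ?V2 \<subseteq> ?S2"
    by (intro hull_minimal convex_PB_sum_ediv_le convex_PB_sum_ediv_ge; blast)+
  ultimately show ?thesis
    by blast
qed

end
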